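(* Let $\mathcal T\in\{\mathcal T_{CDV},\mathcal T_{BCD}\}$. If $B\vdash^{\mathcal T}_{=_{\beta\eta}}\Delta_1:\sigma$ and $\Delta_1\to_\eta\Delta_2$, then $B\vdash^{\mathcal T}_{=_{\beta\eta}}\Delta_2:\sigma$.
   Context: Type atoms: a set $\mathbb{A}$ of symbols; $\omega$ denotes a distinguished atom (the universal type). $\mathbb{A}_\infty=\{\mathtt a_i\mid i\in\mathbb N\}$ with each $\mathtt a_i\neq\omega$, and $\mathbb{A}^\omega_\infty=\mathbb{A}_\infty\cup\{\omega\}$. Intersection types over $\mathbb A$: $\sigma::= a\mid\sigma\to\sigma\mid\sigma\cap\sigma$ ($a\in\mathbb A$). An intersection type theory $\mathcal T$ over $\mathbb A$ is a set of inequalities $\sigma\le\tau$ (written $\sigma\le_{\mathcal T}\tau$) closed under (refl) $\sigma\le\sigma$; (incl) $\sigma\cap\tau\le\sigma$ and $\sigma\cap\tau\le\tau$; (glb) $\rho\le\sigma$ and $\rho\le\tau$ imply $\rho\le\sigma\cap\tau$; (trans) $\sigma\le\tau$ and $\tau\le\rho$ imply $\sigma\le\rho$. Additional axioms/rules: $(\omega_{top})$ $\sigma\le\omega$; $(\omega_{\to})$ $\omega\le\sigma\to\omega$; $(\to\cap)$ $(\sigma\to\tau)\cap(\sigma\to\rho)\le\sigma\to(\tau\cap\rho)$; $(\to)$ $\sigma_2\le\sigma_1$ and $\tau_1\le\tau_2$ imply $\sigma_1\to\tau_1\le\sigma_2\to\tau_2$. $\mathcal T_{CDV}$ = smallest type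 theory over $\mathbb A_\infty$ closed under $(\to)$ and $(\to\cap)$; $\mathcal T_{BCD}$ = smallest over $\mathbb A^\omega_\infty$ closed under $(\to),(\to\cap),(\omega_{top}),(\omega_\to)$. $\Delta$-terms: $\Delta::=u_\Delta\mid x\mid\lambda x{:}\sigma.\Delta\mid\Delta\,\Delta\mid\langle\Delta,\Delta\rangle\mid pr_1\Delta\mid pr_2\Delta\mid\Delta^\sigma$, where for every (not necessarily typable) $\Delta$-term $\Delta$ there is a constant $u_\Delta$. The essence $\|\Delta\|$ is the pure $\lambda$-term defined by $\|x\|=x$, $\|u_\Delta\|=\|\Delta\|$, $\|\Delta^\sigma\|=\|\Delta\|$, $\|\lambda x{:}\sigma.\Delta\|=\lambda x.\|\Delta\|$, $\|\Delta_1\Delta_2\|=\|\Delta_1\|\,\|\Delta_2\|$, $\|\langle\Delta_1,\Delta_2\rangle\|=\|\Delta_1\|$, $\|pr_i\Delta\|=\|\Delta\|$. A basis $B$ is a finite set of declarations $x{:}\sigma$ with distinct variables. The typed system $\Delta^{\mathcal T}_{=_{\beta\eta}}$ derives $B\vdash^{\mathcal T}_{=_{\beta\eta}}\Delta:\sigma$ by: (top) $B\vdash u_\Delta:\omega$ if $\omega\in\mathbb A$; (ax) $B\vdash x:\sigma$ if $x{:}\sigma\in B$; ($\to$I) from $B,x{:}\sigma\vdash\Delta:\tau$ infer $B\vdash\lambda x{:}\sigma.\Delta:\sigma\to\tau$; ($\to$E) from $B\vdash\Delta_1:\sigma\to\tau$ and $B\vdash\Delta_2:\sigma$ infer $B\vdash\Delta_1\Delta_2:\tau$;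 ($\cap$I) from $B\vdash\Delta_1:\sigma$, $B\vdash\Delta_2:\tau$ and $\|\Delta_1\|=_{\beta\eta}\|\Delta_2\|$ infer $B\vdash\langle\Delta_1,\Delta_2\rangle:\sigma\cap\tau$; ($\cap$E$_1$) from $B\vdash\Delta:\sigma\cap\tau$ infer $B\vdash pr_1\Delta:\sigma$; ($\cap$E$_2$) from $B\vdash\Delta:\sigma\cap\tau$ infer $B\vdash pr_2\Delta:\tau$; ($\le_{\mathcal T}$) from $B\vdash\Delta:\sigma$ and $\sigma\le_{\mathcal T}\tau$ infer $B\vdash\Delta^\tau:\tau$. The notion of reduction $(\eta)$ is $\lambda x{:}\sigma.\Delta\,x\to\Delta$ if $x\notin FV(\Delta)$; $\to_\eta$ is its contextual closure, with no reduction performed inside the index $\Delta$ of a constant $u_\Delta$. *)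

theory Defs
  imports Main
begin

text \<open>Atoms: the countable family a_i (A i) together with the universal atom omega.\<close>
datatype atom = A nat | Omega

datatype ity = Atom atom | Arrow ity ity | Inter ity ity

abbreviation omega :: ity where "omega \<equiv> Atom Omega"

fun atoms :: "ity \<Rightarrow> atom set" where
  "atoms (Atom a) = {a}"
| "atoms (Arrow s t) = atoms s \<union> atoms t"
| "atoms (Inter s t) = atoms s \<union> atoms t"

datatype typetheory = CDV | BCD

fun atoms_of :: "typetheory \<Rightarrow> atom set" where
  "atoms_of CDV = range A"
| "atoms_of BCD = UNIV"

definition wf_ty :: "typetheory \<Rightarrow> ity \<Rightarrow> bool" where
  "wf_ty T s \<longleftrightarrow> atoms s \<subseteq> atoms_of T"

inductive leq :: "typetheory \<Rightarrow> ity \<Rightarrow> ity \<Rightarrow> bool" where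
  refl: "wf_ty T s \<Longrightarrow> leq T s s"
| incl1: "wf_ty T s \<Longrightarrow> wf_ty T t \<Longrightarrow> leq T (Inter s t) s"
| incl2: "wf_ty T s \<Longrightarrow> wf_ty T t \<Longrightarrow> leq T (Inter s t) t"
| glb: "leq T r s \<Longrightarrow> leq T r t \<Longrightarrow> leq T r (Inter s t)"
| trans: "leq T s t \<Longrightarrow> leq T t r \<Longrightarrow> leq T s r"
| omega_top: "T = BCD \<Longrightarrow> wf_ty T s \<Longrightarrow> leq T s omega"
| omega_arrow: "T = BCD \<Longrightarrow> wf_ty T s \<Longrightarrow> leq T omega (Arrow s omega)"
| arrow_inter: "wf_ty T s \<Longrightarrow> wf_ty T t \<Longrightarrow> wf_ty T r \<Longrightarrow>
     leq T (Inter (Arrow s t) (Arrow s r)) (Arrow s (Inter t r))"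
| arrow: "leq T s2 s1 \<Longrightarrow> leq T t1 t2 \<Longrightarrow> leq T (Arrow s1 t1) (Arrow s2 t2)"

datatype lterm = LVar nat | LLam lterm | LApp lterm lterm

fun llift :: "nat \<Rightarrow> lterm \<Rightarrow> lterm" where
  "llift k (LVar i) = (if i < k then LVar i else LVar (Suc i))"
| "llift k (LLam t) = LLam (llift (Suc k) t)"
| "llift k (LApp s t) = LApp (llift k s) (llift k t)"

fun lsubst :: "lterm \<Rightarrow> nat \<Rightarrow> lterm \<Rightarrow> lterm" where
  "lsubst (LVar i) k s = (if k < i then LVar (i - 1) else if i = k then s else LVar i)"
| "lsubst (LLam t) k s = LLam (lsubst t (Suc k) (llift 0 s))"
| "lsubst (LApp t u) k s = LApp (lsubst t k s) (lsubst u k s)"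

inductive lbeta_eta :: "lterm \<Rightarrow> lterm \<Rightarrow> bool" where
  beta: "lbeta_eta (LApp (LLam s) t) (lsubst s 0 t)"
| eta: "lbeta_eta (LLam (LApp (llift 0 t) (LVar 0))) t"
| lam: "lbeta_eta s t \<Longrightarrow> lbeta_eta (LLam s) (LLam t)"
| appL: "lbeta_eta s t \<Longrightarrow> lbeta_eta (LApp s u) (LApp t u)"
| appR: "lbeta_eta s t \<Longrightarrow> lbeta_eta (LApp u s) (LApp u t)"

definition eq_beta_eta :: "lterm \<Rightarrow> lterm \<Rightarrow> bool" where
  "eq_beta_eta = equivclp lbeta_eta"

text \<open>U d is the constant u_d indexed by the Delta-term d; Coerce d s is d^s.\<close>
datatype dterm =
    U dterm
  | Var nat
  | Lam ity dterm
  | App dterm dterm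
  | Pair dterm dterm
  | Pr1 dterm
  | Pr2 dterm
  | Coerce dterm ity

fun essence :: "dterm \<Rightarrow> lterm" where
  "essence (U d) = essence d"
| "essence (Var i) = LVar i"
| "essence (Lam s d) = LLam (essence d)"
| "essence (App d e) = LApp (essence d) (essence e)"
| "essence (Pair d e) = essence d"
| "essence (Pr1 d) = essence d"
| "essence (Pr2 d) = essence d"
| "essence (Coerce d s) = essence d"

text \<open>Lifting of free de Bruijn indices; the index of a constant is read in the
  scope where the constant occurs (so that the essence commutes with lifting).\<close>
fun dlift :: "nat \<Rightarrow> dterm \<Rightarrow> dterm" where
  "dlift k (U d) = U (dlift k d)"
| "dlift k (Var i) = (if i < k then Var i else Var (Suc i))"
| "dlift k (Lam s d) = Lam s (dlift (Suc k) d)"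
| "dlift k (App d e) = App (dlift k d) (dlift k e)"
| "dlift k (Pair d e) = Pair (dlift k d) (dlift k e)"
| "dlift k (Pr1 d) = Pr1 (dlift k d)"
| "dlift k (Pr2 d) = Pr2 (dlift k d)"
| "dlift k (Coerce d s) = Coerce (dlift k d) s"

text \<open>eta-reduction: lambda x:s. D x -> D with x not free in D, i.e. the body is
  (lift D) applied to the bound variable 0; contextual closure, but not inside U.\<close>
inductive eta_red :: "dterm \<Rightarrow> dterm \<Rightarrow> bool" where
  eta: "eta_red (Lam s (App (dlift 0 d) (Var 0))) d"
| lam: "eta_red d e \<Longrightarrow> eta_red (Lam s d) (Lam s e)"
| appL: "eta_red d e \<Longrightarrow> eta_red (App d f) (App e f)"
| appR: "eta_red d e \<Longrightarrow> eta_red (App f d) (App f e)"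
| pairL: "eta_red d e \<Longrightarrow> eta_red (Pair d f) (Pair e f)"
| pairR: "eta_red d e \<Longrightarrow> eta_red (Pair f d) (Pair f e)"
| pr1: "eta_red d e \<Longrightarrow> eta_red (Pr1 d) (Pr1 e)"
| pr2: "eta_red d e \<Longrightarrow> eta_red (Pr2 d) (Pr2 e)"
| coerce: "eta_red d e \<Longrightarrow> eta_red (Coerce d s) (Coerce e s)"

type_synonym basis = "nat \<Rightarrow> ity option"

definition basis_cons :: "ity \<Rightarrow> basis \<Rightarrow> basis" where
  "basis_cons s B = (\<lambda>i. case i of 0 \<Rightarrow> Some s | Suc j \<Rightarrow> B j)"

definition wf_basis :: "typetheory \<Rightarrow> basis \<Rightarrow> bool" where
  "wf_basis T B \<longleftrightarrow> finite (dom B) \<and> (\<forall>i s. B i = Some s \<longrightarrow> wf_ty T s)"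

inductive typed :: "typetheory \<Rightarrow> basis \<Rightarrow> dterm \<Rightarrow> ity \<Rightarrow> bool" where
  top: "Omega \<in> atoms_of T \<Longrightarrow> typed T B (U d) omega"
| ax: "B i = Some s \<Longrightarrow> typed T B (Var i) s"
| lamI: "wf_ty T s \<Longrightarrow> typed T (basis_cons s B) d t \<Longrightarrow> typed T B (Lam s d) (Arrow s t)"
| appE: "typed T B d (Arrow s t) \<Longrightarrow> typed T B e s \<Longrightarrow> typed T B (App d e) t"
| interI: "typed T B d s \<Longrightarrow> typed T B e t \<Longrightarrow> eq_beta_eta (essence d) (essence e) \<Longrightarrow>
     typed T B (Pair d e) (Inter s t)"
| interE1: "typed T B d (Inter s t) \<Longrightarrow> typed T B (Pr1 d) s"
| interE2: "typed T B d (Inter s t) \<Longrightarrow> typed T B (Pr2 d) t"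
| sub: "typed T B d s \<Longrightarrow> leq T s t \<Longrightarrow> typed T B (Coerce d t) t"

end

theory Submission
  imports Defs
begin

text \<open>An eta-redex \<open>\<lambda>x:r. D x\<close> can only be typed by deriving \<open>D : r \<rightarrow> t\<close>
  under the basis extended by \<open>x:r\<close>; since x does not occur in D, the declaration
  can be dropped (strengthening), so D itself has type \<open>r \<rightarrow> t\<close>. All other cases
  are congruences, and for the pairing rule the side condition survives because
  eta-reduction changes essences only within their beta-eta class.\<close>

lemma llift_llift: "i \<le> k \<Longrightarrow> llift (Suc k) (llift i t) = llift i (llift k t)"
  by (induction t arbitrary: i k) auto

lemma llift_lsubst: "i \<le> j \<Longrightarrow> llift i (lsubst t j s) = lsubst (llift i t) (Suc j) (llift i s)"
  by (induction t arbitrary: i j s) (auto simp: llift_llift)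

lemma lsubst_llift: "lsubst (llift k t) k s = t"
  by (induction t arbitrary: k s) auto

lemma lsubst_lsubst:
  "i \<le> j \<Longrightarrow> lsubst (lsubst t (Suc j) (llift i v)) i (lsubst u j v) = lsubst (lsubst t i u) j v"
proof (induction t arbitrary: i j u v)
  case (LLam t)
  have "llift 0 (llift i v) = llift (Suc i) (llift 0 v)"
    by (simp add: llift_llift)
  moreover have "lsubst (llift 0 u) (Suc j) (llift 0 v) = llift 0 (lsubst u j v)"
    by (simp add: llift_lsubst)
  ultimately show ?case
    using LLam.IH[of "Suc i" "Suc j" "llift 0 v" "llift 0 u"] LLam.prems by simp
qed (auto simp: lsubst_llift)

lemma lbeta_eta_lsubst: "lbeta_eta s t \<Longrightarrow> lbeta_eta (lsubst s k u) (lsubst t k u)"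
proof (induction arbitrary: k u rule: lbeta_eta.induct)
  case (beta s t)
  have "lbeta_eta (lsubst (LApp (LLam s) t) k u)
      (lsubst (lsubst s (Suc k) (llift 0 u)) 0 (lsubst t k u))"
    by (simp add: lbeta_eta.beta)
  then show ?case
    by (simp add: lsubst_lsubst)
next
  case (eta t)
  have "lsubst (llift 0 t) (Suc k) (llift 0 u) = llift 0 (lsubst t k u)"
    by (simp add: llift_lsubst)
  then show ?case
    by (simp add: lbeta_eta.eta)
qed (auto intro: lbeta_eta.intros)

lemma eq_beta_eta_lsubst: "eq_beta_eta s t \<Longrightarrow> eq_beta_eta (lsubst s k u) (lsubst t k u)"
  unfolding eq_beta_eta_def
proof (induction rule: equivclp_induct)
  case (step y z)
  then show ?case
    by (meson equivclp_into_equivclp lbeta_eta_lsubst symclpI(1))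
qed simp

lemma eq_beta_eta_lliftD: "eq_beta_eta (llift k s) (llift k t) \<Longrightarrow> eq_beta_eta s t"
  using eq_beta_eta_lsubst[of "llift k s" "llift k t" k "LVar 0"] by (simp add: lsubst_llift)

lemma essence_dlift: "essence (dlift k d) = llift k (essence d)"
  by (induction d arbitrary: k) auto

lemma eta_red_essence: "eta_red d e \<Longrightarrow> eq_beta_eta (essence d) (essence e)"
proof -
  assume "eta_red d e"
  then have "essence d = essence e \<or> lbeta_eta (essence d) (essence e)"
    by (induction rule: eta_red.induct) (auto simp: essence_dlift intro: lbeta_eta.intros)
  then show ?thesis
    unfolding eq_beta_eta_def by (metis equivclp_refl r_into_equivclp)
qed

definition basis_insert :: "nat \<Rightarrow> ity option \<Rightarrow> basis \<Rightarrow> basis" where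
  "basis_insert k X B = (\<lambda>i. if i < k then B i else if i = k then X else B (i - 1))"

lemma basis_insert_0: "basis_insert 0 (Some s) B = basis_cons s B"
  by (rule ext) (auto simp: basis_insert_def basis_cons_def split: nat.split)

lemma basis_cons_insert:
  "basis_cons r (basis_insert k X B) = basis_insert (Suc k) X (basis_cons r B)"
  by (rule ext) (auto simp: basis_insert_def basis_cons_def split: nat.split)

lemma typed_dlift_strengthen:
  "typed T B' e t \<Longrightarrow> e = dlift k d \<Longrightarrow> B' = basis_insert k X B \<Longrightarrow> typed T B d t"
proof (induction arbitrary: k d B rule: typed.induct)
  case top
  then show ?case by (cases d) (auto intro: typed.top split: if_splits)
next
  case ax
  then show ?case by (cases d) (auto simp: basis_insert_def intro: typed.ax split: if_splits)
next
  case lamI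
  then show ?case
    by (cases d) (auto intro!: typed.lamI simp: basis_cons_insert split: if_splits)
next
  case appE
  then show ?case by (cases d) (auto intro!: typed.appE split: if_splits)
next
  case interI
  then show ?case
    by (cases d) (auto intro!: typed.interI simp: essence_dlift dest: eq_beta_eta_lliftD
        split: if_splits)
next
  case interE1
  then show ?case by (cases d) (auto intro: typed.interE1 split: if_splits)
next
  case interE2
  then show ?case by (cases d) (auto intro: typed.interE2 split: if_splits)
next
  case sub
  then show ?case by (cases d) (auto intro: typed.sub split: if_splits)
qed

inductive_cases typed_LamE: "typed T B (Lam r d) s"
inductive_cases typed_AppE: "typed T B (App d e) s"
inductive_cases typed_PairE: "typed T B (Pair d e) s"
inductive_cases typed_Pr1E: "typed T B (Pr1 d) s"
inductive_cases typed_Pr2E: "typed T B (Pr2 d) s"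
inductive_cases typed_CoerceE: "typed T B (Coerce d r) s"
inductive_cases typed_VarE: "typed T B (Var i) s"

lemma typed_eta_redex:
  assumes "typed T B (Lam r (App (dlift 0 d) (Var 0))) s"
  shows "typed T B d s"
proof -
  from assms obtain t where s: "s = Arrow r t"
    and body: "typed T (basis_cons r B) (App (dlift 0 d) (Var 0)) t"
    by (elim typed_LamE) simp
  from body obtain r' where lifted: "typed T (basis_cons r B) (dlift 0 d) (Arrow r' t)"
    and arg: "typed T (basis_cons r B) (Var 0) r'"
    by (elim typed_AppE) simp
  from arg have "r' = r"
    by (elim typed_VarE) (simp add: basis_cons_def)
  with lifted have "typed T (basis_insert 0 (Some r) B) (dlift 0 d) (Arrow r t)"
    by (simp add: basis_insert_0)
  then show ?thesis
    using s typed_dlift_strengthen by blast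
qed

lemma typed_eta_red: "eta_red d e \<Longrightarrow> typed T B d s \<Longrightarrow> typed T B e s"
proof (induction arbitrary: B s rule: eta_red.induct)
  case eta
  then show ?case by (rule typed_eta_redex)
next
  case lam
  then show ?case by (auto elim!: typed_LamE intro: typed.lamI)
next
  case appL
  then show ?case by (auto elim!: typed_AppE intro: typed.appE)
next
  case appR
  then show ?case by (auto elim!: typed_AppE intro: typed.appE)
next
  case (pairL d e f)
  then have "eq_beta_eta (essence e) (essence d)"
    using eta_red_essence unfolding eq_beta_eta_def by (metis equivclp_sym)
  with pairL show ?case
    by (auto elim!: typed_PairE intro!: typed.interI simp: eq_beta_eta_def
        intro: equivclp_trans)
next
  case (pairR d e f)
  then have "eq_beta_eta (essence d) (essence e)"
    by (simp add: eta_red_essence)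
  with pairR show ?case
    by (auto elim!: typed_PairE intro!: typed.interI simp: eq_beta_eta_def
        intro: equivclp_trans)
next
  case pr1
  then show ?case by (auto elim!: typed_Pr1E intro: typed.interE1)
next
  case pr2
  then show ?case by (auto elim!: typed_Pr2E intro: typed.interE2)
next
  case coerce
  then show ?case by (auto elim!: typed_CoerceE intro: typed.sub)
qed

text \<open>Subject reduction holds for every type theory and every basis.\<close>

theorem mainTheorem11:
  fixes T :: typetheory and B :: basis and d1 d2 :: dterm and s :: ity
  assumes "T \<in> {CDV, BCD}"
    and "wf_basis T B"
    and "typed T B d1 s"
    and "eta_red d1 d2"
  shows "typed T B d2 s"
  using typed_eta_red assms(3,4) by blast

end
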